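(* Let $G$ be a finite indecomposable group. Then $G$ has Property A if and only if $G$ is Chermak-Delgado simple.
   Context: All groups are finite. A group is indecomposable if it cannot be written as a direct product $H \times K$ with $H \neq 1$ and $K \neq 1$. A group $G$ has Property A if for every non-trivial abelian normal subgroup $A$ of $G$, $|G/C_G(A)| > |A|$. For $H \leq G$, $m_G(H) = |H|\,|C_G(H)|$; $m^*(G) = \max\{ m_G(H) : H \leq G\}$; $\mathcal{CD}(G) = \{ H \leq G : m_G(H) = m^*(G)\}$. $G$ is Chermak-Delgado simple if $\mathcal{CD}(G) = \{1, G\}$. *)

theory Defs
  imports "HOL-Algebra.Algebra"
begin

definition centralizer :: "('a, 'b) monoid_scheme \<Rightarrow> 'a set \<Rightarrow> 'a set" where
  "centralizer G H = {g \<in> carrier G. \<forall>h \<in> H. g \<otimes>\<^bsub>G\<^esub> h = h \<otimes>\<^bsub>G\<^esub> g}"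

definition indecomposable :: "('a, 'b) monoid_scheme \<Rightarrow> bool" where
  "indecomposable G \<longleftrightarrow>
     \<not> (\<exists>H K. H \<lhd> G \<and> K \<lhd> G \<and> H \<inter> K = {\<one>\<^bsub>G\<^esub>} \<and> H <#>\<^bsub>G\<^esub> K = carrier G
              \<and> H \<noteq> {\<one>\<^bsub>G\<^esub>} \<and> K \<noteq> {\<one>\<^bsub>G\<^esub>})"

definition property_A :: "('a, 'b) monoid_scheme \<Rightarrow> bool" where
  "property_A G \<longleftrightarrow>
     (\<forall>A. A \<lhd> G \<and> A \<noteq> {\<one>\<^bsub>G\<^esub>} \<and> (\<forall>x\<in>A. \<forall>y\<in>A. x \<otimes>\<^bsub>G\<^esub> y = y \<otimes>\<^bsub>G\<^esub> x)
          \<longrightarrow> card (rcosets\<^bsub>G\<^esub> (centralizer G A)) > card A)"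

definition cd_measure :: "('a, 'b) monoid_scheme \<Rightarrow> 'a set \<Rightarrow> nat" where
  "cd_measure G H = card H * card (centralizer G H)"

definition cd_max :: "('a, 'b) monoid_scheme \<Rightarrow> nat" where
  "cd_max G = Max {cd_measure G H | H. subgroup H G}"

definition CD :: "('a, 'b) monoid_scheme \<Rightarrow> 'a set set" where
  "CD G = {H. subgroup H G \<and> cd_measure G H = cd_max G}"

definition CD_simple :: "('a, 'b) monoid_scheme \<Rightarrow> bool" where
  "CD_simple G \<longleftrightarrow> CD G = {{\<one>\<^bsub>G\<^esub>}, carrier G}"

end

theory Submission
  imports Defs
begin

text \<open>
  The subgroups attaining the Chermak-Delgado measure form a sublattice closed under
  centralizers and conjugation; the product formula, applied to the meet of two of them,
  even gives \<open>C(H \<inter> K) = C(H) C(K)\<close>. A minimal nontrivial member \<open>Q\<close> of this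
  sublattice is therefore normal, since \<open>Q \<inter> Q\<^sup>g\<close> is either \<open>Q\<close> or trivial, and in the
  latter case \<open>C(Q) C(Q\<^sup>g) = G\<close> forces \<open>g\<close> to act trivially on \<open>Q\<close>. For the same
  reason \<open>Q\<close> is either abelian or meets \<open>C(Q)\<close> trivially.

  Property A says exactly that every nontrivial abelian normal subgroup \<open>A\<close> has
  measure \<open>|A| |C(A)| < |G| = m({1})\<close>. Hence under Property A the least member of the
  sublattice is \<open>1\<close>, so \<open>m\<^sup>*(G) = |G|\<close>, and a minimal nontrivial \<open>Q\<close> below a
  nontrivial member \<open>H\<close> cannot be abelian. Thus \<open>Q \<inter> C(Q) = 1\<close> and \<open>Q C(Q) = G\<close>
  is a direct decomposition, so indecomposability gives \<open>Q = G = H\<close>. Conversely,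
  if the sublattice is \<open>{1, G}\<close>, a nontrivial abelian normal subgroup with measure
  \<open>\<ge> |G|\<close> would be \<open>G\<close> itself, which is impossible for \<open>G \<noteq> 1\<close>.
\<close>

lemma nat_mult_squeeze:
  fixes x y m :: nat
  assumes "x \<le> m" "y \<le> m" "m * m \<le> x * y"
  shows "x = m \<and> y = m"
proof -
  have "x * y \<le> x * m" "x * m \<le> m * m" "x * y \<le> m * y" "m * y \<le> m * m"
    using assms by simp_all
  then have "x * m = m * m" "m * y = m * m"
    using assms(3) by linarith+
  then show ?thesis
    using assms(1,2) by (cases "m = 0") auto
qed

lemma (in group) inv_mult_cancel_left [simp]:
  "x \<in> carrier G \<Longrightarrow> y \<in> carrier G \<Longrightarrow> inv x \<otimes> (x \<otimes> y) = y"
  by (simp add: m_assoc [symmetric])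

lemma (in group) centralizer_subset: "centralizer G H \<subseteq> carrier G"
  unfolding centralizer_def by auto

lemma (in group) centralizer_antimono: "H \<subseteq> K \<Longrightarrow> centralizer G K \<subseteq> centralizer G H"
  unfolding centralizer_def by auto

lemma (in group) subset_centralizer_centralizer:
  "H \<subseteq> carrier G \<Longrightarrow> H \<subseteq> centralizer G (centralizer G H)"
  unfolding centralizer_def by auto

lemma (in group) centralizer_one: "centralizer G {\<one>} = carrier G"
  unfolding centralizer_def by auto

lemma (in group) subgroup_centralizer:
  assumes H: "H \<subseteq> carrier G"
  shows "subgroup (centralizer G H) G"
proof (rule subgroupI)
  show "centralizer G H \<subseteq> carrier G"
    by (rule centralizer_subset)
  have "\<one> \<in> centralizer G H"
    using H unfolding centralizer_def by auto
  then show "centralizer G H \<noteq> {}"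
    by blast
next
  fix a assume a: "a \<in> centralizer G H"
  show "inv a \<in> centralizer G H"
    unfolding centralizer_def
  proof safe
    fix h assume h: "h \<in> H"
    have ac: "a \<in> carrier G" and hc: "h \<in> carrier G" and ah: "a \<otimes> h = h \<otimes> a"
      using a h H unfolding centralizer_def by auto
    have "inv a \<otimes> h = inv a \<otimes> (h \<otimes> a) \<otimes> inv a"
      using ac hc by (simp add: m_assoc)
    also have "\<dots> = h \<otimes> inv a"
      using ac hc by (simp add: ah [symmetric] m_assoc)
    finally show "inv a \<otimes> h = h \<otimes> inv a" .
  qed (use a in \<open>auto simp: centralizer_def\<close>)
next
  fix a b assume a: "a \<in> centralizer G H" and b: "b \<in> centralizer G H"
  have ac: "a \<in> carrier G" and bc: "b \<in> carrier G"
    using a b centralizer_subset by auto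
  have "a \<otimes> b \<otimes> h = h \<otimes> (a \<otimes> b)" if h: "h \<in> H" for h
  proof -
    have hc: "h \<in> carrier G" and ah: "a \<otimes> h = h \<otimes> a" and bh: "b \<otimes> h = h \<otimes> b"
      using a b h H unfolding centralizer_def by auto
    have "a \<otimes> b \<otimes> h = a \<otimes> (h \<otimes> b)"
      using ac bc hc by (simp add: bh m_assoc)
    also have "\<dots> = h \<otimes> (a \<otimes> b)"
      using ac bc hc by (simp add: ah m_assoc [symmetric])
    finally show ?thesis .
  qed
  then show "a \<otimes> b \<in> centralizer G H"
    using ac bc unfolding centralizer_def by auto
qed

lemma (in group) set_mult_centralizer_subset:
  assumes "H \<subseteq> carrier G"
  shows "centralizer G H <#> centralizer G K \<subseteq> centralizer G (H \<inter> K)"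
proof -
  have "subgroup (centralizer G (H \<inter> K)) G"
    using assms by (intro subgroup_centralizer) blast
  then show ?thesis
    using centralizer_antimono [of "H \<inter> K" H] centralizer_antimono [of "H \<inter> K" K]
    unfolding set_mult_def by (auto intro: subgroup.m_closed)
qed

text \<open>One half of the product formula \<open>|H| |K| = |HK| |H \<inter> K|\<close>: every fibre of the
  multiplication map \<open>H \<times> K \<rightarrow> HK\<close> injects into \<open>H \<inter> K\<close>.\<close>

lemma (in group) card_mult_fibre_le:
  assumes H: "subgroup H G" and K: "subgroup K G" and "finite H"
    and h0: "h0 \<in> H" and k0: "k0 \<in> K"
  shows "card {(h, k). h \<in> H \<and> k \<in> K \<and> h \<otimes> k = h0 \<otimes> k0} \<le> card (H \<inter> K)"
proof -
  let ?F = "{(h, k). h \<in> H \<and> k \<in> K \<and> h \<otimes> k = h0 \<otimes> k0}"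
  have carrH: "x \<in> carrier G" if "x \<in> H" for x
    using subgroup.mem_carrier [OF H that] .
  have carrK: "x \<in> carrier G" if "x \<in> K" for x
    using subgroup.mem_carrier [OF K that] .
  have "inj_on (\<lambda>(h, k). inv h0 \<otimes> h) ?F"
  proof (rule inj_onI, clarify)
    fix h k h' k'
    assume hk: "h \<in> H" "k \<in> K" "h \<otimes> k = h0 \<otimes> k0"
      and hk': "h' \<in> H" "k' \<in> K" "h' \<otimes> k' = h0 \<otimes> k0"
      and "inv h0 \<otimes> h = inv h0 \<otimes> h'"
    then have "h = h'"
      using carrH h0 by simp
    moreover from this have "h' \<otimes> k = h' \<otimes> k'"
      using hk(3) hk'(3) by simp
    then have "k = k'"
      by (rule l_cancel) (use hk hk' carrH carrK in auto)
    ultimately show "h = h' \<and> k = k'" ..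
  qed
  moreover have "(\<lambda>(h, k). inv h0 \<otimes> h) ` ?F \<subseteq> H \<inter> K"
  proof
    fix x assume "x \<in> (\<lambda>(h, k). inv h0 \<otimes> h) ` ?F"
    then obtain h k where hk: "h \<in> H" "k \<in> K" "h \<otimes> k = h0 \<otimes> k0" and x: "x = inv h0 \<otimes> h"
      by auto
    have "inv h0 \<otimes> h = inv h0 \<otimes> (h \<otimes> k) \<otimes> inv k"
      using hk(1,2) h0 carrH carrK by (simp add: m_assoc)
    also have "\<dots> = k0 \<otimes> inv k"
      using hk h0 k0 carrH carrK by (simp add: m_assoc [symmetric])
    finally have "x = k0 \<otimes> inv k"
      using x by simp
    moreover have "x \<in> H"
      using H hk h0 x by (simp add: subgroup.m_closed subgroup.m_inv_closed)
    moreover have "k0 \<otimes> inv k \<in> K"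
      using K hk k0 by (simp add: subgroup.m_closed subgroup.m_inv_closed)
    ultimately show "x \<in> H \<inter> K"
      by simp
  qed
  ultimately show ?thesis
    using \<open>finite H\<close> by (intro card_inj_on_le) auto
qed

lemma (in group) card_mult_le_card_set_mult_inter:
  assumes H: "subgroup H G" and K: "subgroup K G" and fin: "finite H" "finite K"
  shows "card H * card K \<le> card (H <#> K) * card (H \<inter> K)"
proof -
  define F where "F z = {(h, k). h \<in> H \<and> k \<in> K \<and> h \<otimes> k = z}" for z
  have fin_HK: "finite (H <#> K)"
    using fin unfolding set_mult_def by blast
  have fin_F: "finite (F z)" for z
    by (rule finite_subset [of _ "H \<times> K"]) (use fin in \<open>auto simp: F_def\<close>)
  have "card H * card K = card (H \<times> K)"
    by (simp add: card_cartesian_product)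
  also have "\<dots> \<le> card (\<Union>z\<in>H <#> K. F z)"
    by (intro card_mono finite_UN_I fin_HK fin_F) (auto simp: F_def set_mult_def)
  also have "\<dots> \<le> (\<Sum>z\<in>H <#> K. card (F z))"
    using fin_HK by (rule card_UN_le)
  also have "\<dots> \<le> (\<Sum>z\<in>H <#> K. card (H \<inter> K))"
    using card_mult_fibre_le [OF H K fin(1)] by (intro sum_mono) (auto simp: F_def set_mult_def)
  finally show ?thesis
    by (simp add: mult.commute)
qed

lemma (in group) conjugate_subgroup:
  assumes "g \<in> carrier G" "subgroup Q G"
  shows "subgroup ((\<lambda>x. g \<otimes> x \<otimes> inv g) ` Q) G"
proof -
  have "(\<lambda>x. g \<otimes> x \<otimes> inv g) ` Q = g <# Q #> inv g"
    unfolding l_coset_def r_coset_def by blast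
  then show ?thesis
    using subgroup_conjugation_is_surj2 [OF assms] by simp
qed

lemma (in group) card_conjugate:
  assumes "g \<in> carrier G" "Q \<subseteq> carrier G"
  shows "card ((\<lambda>x. g \<otimes> x \<otimes> inv g) ` Q) = card Q"
proof (rule card_image, rule inj_onI)
  fix x y assume "x \<in> Q" "y \<in> Q" "g \<otimes> x \<otimes> inv g = g \<otimes> y \<otimes> inv g"
  then show "x = y"
    using assms conjugation_is_inj [of g x y] by blast
qed

lemma (in group) conjugate_centralizer_subset:
  assumes g: "g \<in> carrier G" and Q: "Q \<subseteq> carrier G"
  shows "(\<lambda>x. g \<otimes> x \<otimes> inv g) ` centralizer G Q
           \<subseteq> centralizer G ((\<lambda>x. g \<otimes> x \<otimes> inv g) ` Q)"
proof clarify
  fix c assume c: "c \<in> centralizer G Q"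
  then have cc: "c \<in> carrier G"
    using centralizer_subset by blast
  have "(g \<otimes> c \<otimes> inv g) \<otimes> (g \<otimes> x \<otimes> inv g) = (g \<otimes> x \<otimes> inv g) \<otimes> (g \<otimes> c \<otimes> inv g)"
    if x: "x \<in> Q" for x
  proof -
    have xc: "x \<in> carrier G" and cx: "c \<otimes> x = x \<otimes> c"
      using x Q c unfolding centralizer_def by auto
    have "(g \<otimes> c \<otimes> inv g) \<otimes> (g \<otimes> x \<otimes> inv g) = g \<otimes> (c \<otimes> x) \<otimes> inv g"
      using g cc xc by (simp add: m_assoc)
    also have "\<dots> = (g \<otimes> x \<otimes> inv g) \<otimes> (g \<otimes> c \<otimes> inv g)"
      using g cc xc by (simp add: cx m_assoc)
    finally show ?thesis .
  qed
  then show "g \<otimes> c \<otimes> inv g \<in> centralizer G ((\<lambda>x. g \<otimes> x \<otimes> inv g) ` Q)"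
    using g cc unfolding centralizer_def by auto
qed

text \<open>Writing \<open>g\<inverse> = k\<^sub>1 k\<^sub>2\<close>, the element \<open>k\<^sub>2 = k\<^sub>1\<inverse> g\<inverse>\<close> centralizes \<open>Q\<^sup>g\<close>, so
  \<open>g h g\<inverse> = k\<^sub>2 (g h g\<inverse>) k\<^sub>2\<inverse> = k\<^sub>1\<inverse> h k\<^sub>1 = h\<close>.\<close>

lemma (in group) conjugate_eq_of_inv_in_centralizer_product:
  assumes g: "g \<in> carrier G" and Q: "Q \<subseteq> carrier G" and h: "h \<in> Q"
    and "inv g \<in> centralizer G Q <#> centralizer G ((\<lambda>x. g \<otimes> x \<otimes> inv g) ` Q)"
  shows "g \<otimes> h \<otimes> inv g = h"
proof -
  obtain k1 k2 where k1: "k1 \<in> centralizer G Q"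
    and k2: "k2 \<in> centralizer G ((\<lambda>x. g \<otimes> x \<otimes> inv g) ` Q)" and gk: "inv g = k1 \<otimes> k2"
    using assms(4) unfolding set_mult_def by auto
  have hc: "h \<in> carrier G" and k1c: "k1 \<in> carrier G" and k2c: "k2 \<in> carrier G"
    using h Q k1 k2 centralizer_subset by auto
  have k2_eq: "k2 = inv k1 \<otimes> inv g"
    using gk g k1c k2c by (simp add: m_assoc [symmetric])
  have "inv k1 \<in> centralizer G Q"
    using k1 subgroup.m_inv_closed [OF subgroup_centralizer [OF Q]] by blast
  then have k1h: "inv k1 \<otimes> h = h \<otimes> inv k1"
    using h unfolding centralizer_def by auto
  define y where "y = g \<otimes> h \<otimes> inv g"
  have yc: "y \<in> carrier G"
    unfolding y_def using g hc by simp
  have k2y: "k2 \<otimes> y = y \<otimes> k2"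
    using k2 h unfolding y_def centralizer_def by blast
  have "inv k1 \<otimes> h \<otimes> inv g = k2 \<otimes> y"
    unfolding k2_eq y_def using g hc k1c by (simp add: m_assoc)
  also have "\<dots> = y \<otimes> inv k1 \<otimes> inv g"
    unfolding k2y using k2_eq yc k1c g by (simp add: m_assoc)
  finally have "h \<otimes> inv k1 = y \<otimes> inv k1"
    using g hc k1c yc by (simp add: k1h [symmetric])
  then show ?thesis
    using hc yc k1c unfolding y_def by simp
qed

lemma (in group) set_mult_commute:
  assumes "\<And>h k. h \<in> H \<Longrightarrow> k \<in> K \<Longrightarrow> h \<otimes> k = k \<otimes> h"
  shows "H <#> K = K <#> H"
proof -
  have sub: "A <#> B \<subseteq> B <#> A" if comm: "\<And>a b. a \<in> A \<Longrightarrow> b \<in> B \<Longrightarrow> a \<otimes> b = b \<otimes> a" for A B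
  proof
    fix x assume "x \<in> A <#> B"
    then obtain a b where "a \<in> A" "b \<in> B" "x = a \<otimes> b"
      unfolding set_mult_def by blast
    then show "x \<in> B <#> A"
      using comm unfolding set_mult_def by blast
  qed
  have "H <#> K \<subseteq> K <#> H"
    using assms by (rule sub)
  moreover have "K <#> H \<subseteq> H <#> K"
    by (rule sub) (metis assms)
  ultimately show ?thesis
    by (rule subset_antisym)
qed

lemma (in group) commuting_product_normal:
  assumes H: "subgroup H G" and K: "subgroup K G"
    and comm: "\<And>h k. h \<in> H \<Longrightarrow> k \<in> K \<Longrightarrow> h \<otimes> k = k \<otimes> h"
    and HK: "H <#> K = carrier G"
  shows "H \<lhd> G"
  unfolding normal_inv_iff
proof (intro conjI H ballI)
  fix g x assume g: "g \<in> carrier G" and x: "x \<in> H"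
  have "g \<in> H <#> K"
    using g HK by simp
  then obtain h k where hk: "h \<in> H" "k \<in> K" "g = h \<otimes> k"
    unfolding set_mult_def by blast
  have c: "h \<in> carrier G" "k \<in> carrier G" "x \<in> carrier G"
    using hk x subgroup.mem_carrier [OF H] subgroup.mem_carrier [OF K] by auto
  have "g \<otimes> x \<otimes> inv g = h \<otimes> (k \<otimes> x) \<otimes> inv k \<otimes> inv h"
    using c hk by (simp add: m_assoc inv_mult_group)
  also have "\<dots> = h \<otimes> x \<otimes> inv h"
    using c by (simp add: comm [OF x hk(2), symmetric] m_assoc)
  finally show "g \<otimes> x \<otimes> inv g \<in> H"
    using hk x H by (simp add: subgroup.m_closed subgroup.m_inv_closed)
qed

lemma (in group) normal_centralizer_of_set_mult_eq:
  assumes Q: "subgroup Q G" and product: "Q <#> centralizer G Q = carrier G"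
  shows "centralizer G Q \<lhd> G"
proof -
  have comm: "\<And>h k. h \<in> Q \<Longrightarrow> k \<in> centralizer G Q \<Longrightarrow> h \<otimes> k = k \<otimes> h"
    unfolding centralizer_def by auto
  have "Q <#> centralizer G Q = centralizer G Q <#> Q"
    using comm by (rule set_mult_commute)
  then have "centralizer G Q <#> Q = carrier G"
    using product by simp
  then show ?thesis
    using Q comm subgroup_centralizer [OF subgroup.subset [OF Q]]
    by (intro commuting_product_normal) auto
qed

locale finite_group = group +
  assumes finite_carrier: "finite (carrier G)"

context finite_group
begin

lemma finite_subgroup: "subgroup H G \<Longrightarrow> finite H"
  using finite_carrier subgroup.subset finite_subset by blast

lemma finite_subgroups: "finite {H. subgroup H G}"
  using finite_carrier by (rule finite_subset [rotated, OF finite_Pow_iff [THEN iffD2]])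
    (auto dest: subgroup.subset)

lemma cd_measure_le_cd_max: "subgroup H G \<Longrightarrow> cd_measure G H \<le> cd_max G"
  unfolding cd_max_def using finite_subgroups by (intro Max_ge) auto

lemma CD_nonempty: "\<exists>H. H \<in> CD G"
proof -
  have "cd_max G \<in> {cd_measure G H | H. subgroup H G}"
    unfolding cd_max_def using finite_subgroups triv_subgroup by (intro Max_in) auto
  then show ?thesis
    unfolding CD_def by auto
qed

lemma CD_iff_cd_max_le: "subgroup H G \<Longrightarrow> H \<in> CD G \<longleftrightarrow> cd_max G \<le> cd_measure G H"
  unfolding CD_def using cd_measure_le_cd_max by (auto intro: antisym)

lemma CD_imp_subgroup: "H \<in> CD G \<Longrightarrow> subgroup H G"
  unfolding CD_def by simp

lemma cd_measure_one: "cd_measure G {\<one>} = order G"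
  unfolding cd_measure_def order_def by (simp add: centralizer_one)

lemma order_le_cd_max: "order G \<le> cd_max G"
  using cd_measure_le_cd_max [OF triv_subgroup] by (simp add: cd_measure_one)

lemma one_in_CD_iff: "{\<one>} \<in> CD G \<longleftrightarrow> cd_max G = order G"
  using CD_iff_cd_max_le [OF triv_subgroup] order_le_cd_max by (auto simp: cd_measure_one)

lemma carrier_in_CD:
  assumes max: "cd_max G = order G"
  shows "carrier G \<in> CD G"
proof -
  have "0 < card (centralizer G (carrier G))"
    using subgroup.finite_imp_card_positive [OF subgroup_centralizer] finite_carrier by blast
  then have "order G \<le> cd_measure G (carrier G)"
    unfolding cd_measure_def order_def by simp
  then show ?thesis
    using max CD_iff_cd_max_le [OF subgroup_self] by simp
qed

lemma CD_centralizer: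
  assumes "H \<in> CD G"
  shows "centralizer G H \<in> CD G"
proof -
  have H: "subgroup H G"
    using assms by (rule CD_imp_subgroup)
  then have HG: "H \<subseteq> carrier G"
    by (rule subgroup.subset)
  have "card H \<le> card (centralizer G (centralizer G H))"
    using subset_centralizer_centralizer [OF HG]
    by (rule card_mono [OF finite_subset [OF centralizer_subset finite_carrier]])
  then have "cd_measure G H \<le> cd_measure G (centralizer G H)"
    unfolding cd_measure_def by (simp add: mult.commute)
  then show ?thesis
    using assms CD_iff_cd_max_le H subgroup_centralizer [OF HG] by auto
qed

lemma CD_conjugate:
  assumes "H \<in> CD G" and g: "g \<in> carrier G"
  shows "(\<lambda>x. g \<otimes> x \<otimes> inv g) ` H \<in> CD G"
proof -
  let ?Hg = "(\<lambda>x. g \<otimes> x \<otimes> inv g) ` H"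
  have H: "subgroup H G"
    using assms(1) by (rule CD_imp_subgroup)
  then have HG: "H \<subseteq> carrier G"
    by (rule subgroup.subset)
  have Hg: "subgroup ?Hg G"
    using conjugate_subgroup [OF g H] .
  have "card (centralizer G H) = card ((\<lambda>x. g \<otimes> x \<otimes> inv g) ` centralizer G H)"
    using card_conjugate [OF g centralizer_subset] by simp
  also have "\<dots> \<le> card (centralizer G ?Hg)"
    using conjugate_centralizer_subset [OF g HG]
    by (rule card_mono [OF finite_subset [OF centralizer_subset finite_carrier]])
  finally have "cd_measure G H \<le> cd_measure G ?Hg"
    unfolding cd_measure_def by (simp add: card_conjugate [OF g HG])
  then show ?thesis
    using assms CD_iff_cd_max_le H Hg by auto
qed

lemma card_set_mult_mult_card_centralizer_Int_le:
  assumes H: "subgroup H G" and K: "subgroup K G"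
  shows "card (H <#> K) * card (centralizer G H \<inter> centralizer G K) \<le> cd_max G"
proof -
  define J where "J = centralizer G (centralizer G H \<inter> centralizer G K)"
  have J: "subgroup J G"
    unfolding J_def using centralizer_subset by (intro subgroup_centralizer) auto
  have "H \<subseteq> J" "K \<subseteq> J"
    using H K subgroup.subset unfolding J_def centralizer_def by fastforce+
  then have "H <#> K \<subseteq> J"
    using J unfolding set_mult_def by (auto intro: subgroup.m_closed)
  then have "card (H <#> K) \<le> card J"
    by (rule card_mono [OF finite_subgroup [OF J]])
  moreover have "centralizer G H \<inter> centralizer G K \<subseteq> centralizer G J"
    unfolding J_def using centralizer_subset by (intro subset_centralizer_centralizer) auto
  then have "card (centralizer G H \<inter> centralizer G K) \<le> card (centralizer G J)"
    by (rule card_mono [OF finite_subset [OF centralizer_subset finite_carrier]])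
  ultimately have "card (H <#> K) * card (centralizer G H \<inter> centralizer G K) \<le> cd_measure G J"
    unfolding cd_measure_def by (rule mult_le_mono)
  then show ?thesis
    using cd_measure_le_cd_max [OF J] by simp
qed

text \<open>The product formula for \<open>H, K\<close> and for \<open>C(H), C(K)\<close> bounds \<open>m\<^sup>*\<^sup>2 = m(H) m(K)\<close>
  by \<open>|H \<inter> K| |C(H) C(K)| \<cdot> |HK| |C(H) \<inter> C(K)|\<close>, where both factors are at most
  \<open>m\<^sup>*\<close>; hence both are equal to \<open>m\<^sup>*\<close>.\<close>

lemma CD_Int:
  assumes "H \<in> CD G" "K \<in> CD G"
  shows "H \<inter> K \<in> CD G"
    and "centralizer G (H \<inter> K) = centralizer G H <#> centralizer G K"
proof -
  have H: "subgroup H G" and K: "subgroup K G"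
    using assms CD_imp_subgroup by auto
  have CH: "subgroup (centralizer G H) G" and CK: "subgroup (centralizer G K) G"
    using subgroup_centralizer subgroup.subset [OF H] subgroup.subset [OF K] by auto
  have HK: "subgroup (H \<inter> K) G"
    using H K by (rule subgroups_Inter_pair)
  have CHK: "subgroup (centralizer G (H \<inter> K)) G"
    using H subgroup.subset by (intro subgroup_centralizer) blast
  have prod_sub: "centralizer G H <#> centralizer G K \<subseteq> centralizer G (H \<inter> K)"
    using subgroup.subset [OF H] by (rule set_mult_centralizer_subset)
  define x where "x = card (H \<inter> K) * card (centralizer G H <#> centralizer G K)"
  define y where "y = card (H <#> K) * card (centralizer G H \<inter> centralizer G K)"
  have x_le: "x \<le> cd_measure G (H \<inter> K)"
    unfolding x_def cd_measure_def using prod_sub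
    by (simp add: card_mono [OF finite_subgroup [OF CHK]])
  have "cd_max G = card H * card (centralizer G H)" "cd_max G = card K * card (centralizer G K)"
    using assms unfolding CD_def cd_measure_def by auto
  then have "cd_max G * cd_max G
      = (card H * card K) * (card (centralizer G H) * card (centralizer G K))"
    by (simp only: mult_ac)
  also have "\<dots> \<le> (card (H <#> K) * card (H \<inter> K))
      * (card (centralizer G H <#> centralizer G K) * card (centralizer G H \<inter> centralizer G K))"
    using card_mult_le_card_set_mult_inter [OF H K finite_subgroup [OF H] finite_subgroup [OF K]]
      card_mult_le_card_set_mult_inter [OF CH CK finite_subgroup [OF CH] finite_subgroup [OF CK]]
    by (rule mult_le_mono)
  also have "\<dots> = x * y"
    unfolding x_def y_def by (simp add: ac_simps)
  finally have "cd_max G * cd_max G \<le> x * y" .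
  moreover have "x \<le> cd_max G"
    using x_le cd_measure_le_cd_max [OF HK] by simp
  moreover have "y \<le> cd_max G"
    unfolding y_def using H K by (rule card_set_mult_mult_card_centralizer_Int_le)
  ultimately have "x = cd_max G"
    using nat_mult_squeeze by blast
  then have x_eq: "x = cd_measure G (H \<inter> K)" and "cd_measure G (H \<inter> K) = cd_max G"
    using x_le cd_measure_le_cd_max [OF HK] by auto
  then show "H \<inter> K \<in> CD G"
    unfolding CD_def using HK by simp
  have "card (centralizer G H <#> centralizer G K) = card (centralizer G (H \<inter> K))"
    using x_eq subgroup.finite_imp_card_positive [OF HK finite_carrier]
    unfolding x_def cd_measure_def by simp
  then show "centralizer G (H \<inter> K) = centralizer G H <#> centralizer G K"
    using prod_sub by (metis card_subset_eq finite_subgroup [OF CHK])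
qed

lemma CD_Int_centralizer: "Q \<in> CD G \<Longrightarrow> Q \<inter> centralizer G Q \<in> CD G"
  using CD_Int(1) CD_centralizer by blast

lemma CD_minimal_normal:
  assumes Q_CD: "Q \<in> CD G"
    and minimal: "\<And>D. D \<in> CD G \<Longrightarrow> D \<subseteq> Q \<Longrightarrow> D = Q \<or> D = {\<one>}"
  shows "Q \<lhd> G"
  unfolding normal_inv_iff
proof (intro conjI ballI)
  show Q: "subgroup Q G"
    using Q_CD by (rule CD_imp_subgroup)
  then have QG: "Q \<subseteq> carrier G"
    by (rule subgroup.subset)
  fix g h assume g: "g \<in> carrier G" and h: "h \<in> Q"
  let ?Qg = "(\<lambda>x. g \<otimes> x \<otimes> inv g) ` Q"
  have Qg: "?Qg \<in> CD G"
    using Q_CD g by (rule CD_conjugate)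
  have "Q \<inter> ?Qg = Q \<or> Q \<inter> ?Qg = {\<one>}"
    using minimal CD_Int(1) [OF Q_CD Qg] by blast
  then show "g \<otimes> h \<otimes> inv g \<in> Q"
  proof
    assume "Q \<inter> ?Qg = Q"
    then have "Q \<subseteq> ?Qg"
      by blast
    then have "Q = ?Qg"
      using card_subset_eq [OF finite_subgroup [OF CD_imp_subgroup [OF Qg]]]
        card_conjugate [OF g QG] by simp
    then show ?thesis
      using h by blast
  next
    assume "Q \<inter> ?Qg = {\<one>}"
    then have "centralizer G Q <#> centralizer G ?Qg = carrier G"
      using CD_Int(2) [OF Q_CD Qg] by (simp add: centralizer_one)
    then have "inv g \<in> centralizer G Q <#> centralizer G ?Qg"
      using g by simp
    then have "g \<otimes> h \<otimes> inv g = h"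
      by (rule conjugate_eq_of_inv_in_centralizer_product [OF g QG h])
    then show ?thesis
      using h by simp
  qed
qed

lemma property_A_iff_cd_measure_less:
  "property_A G \<longleftrightarrow>
     (\<forall>A. A \<lhd> G \<and> A \<noteq> {\<one>} \<and> (\<forall>x\<in>A. \<forall>y\<in>A. x \<otimes> y = y \<otimes> x)
          \<longrightarrow> cd_measure G A < order G)"
proof -
  have "card A < card (rcosets (centralizer G A)) \<longleftrightarrow> cd_measure G A < order G"
    if "A \<lhd> G" for A
  proof -
    have CA: "subgroup (centralizer G A) G"
      using subgroup_centralizer [OF subgroup.subset [OF normal_imp_subgroup [OF that]]] .
    have "order G = card (rcosets (centralizer G A)) * card (centralizer G A)"
      using lagrange [OF CA] by simp
    then show ?thesis
      unfolding cd_measure_def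
      using subgroup.finite_imp_card_positive [OF CA finite_carrier] by simp
  qed
  then show ?thesis
    unfolding property_A_def by blast
qed

lemma property_A_imp_cd_max_eq_order:
  assumes "property_A G"
  shows "cd_max G = order G"
proof -
  obtain M where M: "M \<in> CD G" and least: "\<And>D. D \<in> CD G \<Longrightarrow> card M \<le> card D"
    using CD_nonempty ex_has_least_nat [of "\<lambda>H. H \<in> CD G" _ card] by blast
  have finM: "finite M"
    using finite_subgroup [OF CD_imp_subgroup [OF M]] .
  have minimal: "D = M" if "D \<in> CD G" "D \<subseteq> M" for D
    using card_seteq [OF finM that(2) least [OF that(1)]] .
  have "M \<inter> centralizer G M = M"
    using minimal CD_Int_centralizer [OF M] by blast
  then have abelian: "\<forall>x\<in>M. \<forall>y\<in>M. x \<otimes> y = y \<otimes> x"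
    unfolding centralizer_def by blast
  have "M \<lhd> G"
    using CD_minimal_normal [OF M] minimal by blast
  moreover have "\<not> cd_measure G M < order G"
    using M order_le_cd_max unfolding CD_def by simp
  ultimately have "M = {\<one>}"
    using assms abelian by (auto simp: property_A_iff_cd_measure_less)
  then show ?thesis
    using M one_in_CD_iff by simp
qed

lemma CD_atom_below:
  assumes "H \<in> CD G" "H \<noteq> {\<one>}"
  obtains Q where "Q \<in> CD G" "Q \<subseteq> H" "Q \<noteq> {\<one>}"
    and "\<And>D. D \<in> CD G \<Longrightarrow> D \<subseteq> Q \<Longrightarrow> D = Q \<or> D = {\<one>}"
proof -
  let ?S = "{Q. Q \<in> CD G \<and> Q \<subseteq> H \<and> Q \<noteq> {\<one>}}"
  obtain Q where Q: "Q \<in> ?S" and least: "\<And>D. D \<in> ?S \<Longrightarrow> card Q \<le> card D"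
    using assms ex_has_least_nat [of "\<lambda>Q. Q \<in> ?S" H card] by blast
  have Q_CD: "Q \<in> CD G"
    using Q by simp
  have finQ: "finite Q"
    using finite_subgroup [OF CD_imp_subgroup [OF Q_CD]] .
  have minimal: "D = Q \<or> D = {\<one>}" if D: "D \<in> CD G" "D \<subseteq> Q" for D
  proof (cases "D = {\<one>}")
    case False
    then have "card Q \<le> card D"
      using D Q by (intro least) auto
    then show ?thesis
      using card_seteq [OF finQ D(2)] by blast
  qed simp
  show ?thesis
    by (rule that [OF Q_CD _ _ minimal]) (use Q in auto)
qed

lemma CD_set_mult_centralizer:
  assumes Q: "Q \<in> CD G" and max: "cd_max G = order G"
    and trivial_Int: "Q \<inter> centralizer G Q = {\<one>}"
  shows "Q <#> centralizer G Q = carrier G"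
proof -
  have Qs: "subgroup Q G"
    using Q by (rule CD_imp_subgroup)
  have CQ: "subgroup (centralizer G Q) G"
    using subgroup_centralizer [OF subgroup.subset [OF Qs]] .
  have "order G \<le> card (Q <#> centralizer G Q)"
    using card_mult_le_card_set_mult_inter [OF Qs CQ finite_subgroup [OF Qs] finite_subgroup [OF CQ]]
      Q max trivial_Int unfolding CD_def cd_measure_def by simp
  moreover have "Q <#> centralizer G Q \<subseteq> carrier G"
    using subgroup.subset [OF Qs] centralizer_subset unfolding set_mult_def by auto
  ultimately show ?thesis
    using card_seteq [OF finite_carrier] unfolding order_def by blast
qed

lemma property_A_imp_CD_trivial:
  assumes pA: "property_A G" and ind: "indecomposable G"
    and H: "H \<in> CD G" and nontriv: "H \<noteq> {\<one>}"
  shows "H = carrier G"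
proof -
  have max: "cd_max G = order G"
    using pA by (rule property_A_imp_cd_max_eq_order)
  obtain Q where Q: "Q \<in> CD G" and QH: "Q \<subseteq> H" and Q_nontriv: "Q \<noteq> {\<one>}"
    and minimal: "\<And>D. D \<in> CD G \<Longrightarrow> D \<subseteq> Q \<Longrightarrow> D = Q \<or> D = {\<one>}"
    using CD_atom_below [OF H nontriv] by blast
  have Qs: "subgroup Q G"
    using Q by (rule CD_imp_subgroup)
  have normal_Q: "Q \<lhd> G"
    using Q minimal by (rule CD_minimal_normal)
  have "Q \<inter> centralizer G Q \<noteq> Q"
  proof
    assume "Q \<inter> centralizer G Q = Q"
    then have "\<forall>x\<in>Q. \<forall>y\<in>Q. x \<otimes> y = y \<otimes> x"
      unfolding centralizer_def by blast
    then have "cd_measure G Q < order G"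
      using pA normal_Q Q_nontriv by (auto simp: property_A_iff_cd_measure_less)
    then show False
      using Q max unfolding CD_def by simp
  qed
  then have trivial_Int: "Q \<inter> centralizer G Q = {\<one>}"
    using minimal CD_Int_centralizer [OF Q] by blast
  have product: "Q <#> centralizer G Q = carrier G"
    using Q max trivial_Int by (rule CD_set_mult_centralizer)
  have "centralizer G Q \<lhd> G"
    using Qs product by (rule normal_centralizer_of_set_mult_eq)
  then have "centralizer G Q = {\<one>}"
    using ind normal_Q trivial_Int product Q_nontriv unfolding indecomposable_def by blast
  then have "card Q = order G"
    using Q max unfolding CD_def cd_measure_def by simp
  then have "Q = carrier G"
    using card_subset_eq [OF finite_carrier subgroup.subset [OF Qs]] unfolding order_def by blast
  then show ?thesis
    using QH subgroup.subset [OF CD_imp_subgroup [OF H]] by blast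
qed

lemma property_A_imp_CD_simple:
  assumes "property_A G" "indecomposable G"
  shows "CD_simple G"
proof -
  have max: "cd_max G = order G"
    using assms(1) by (rule property_A_imp_cd_max_eq_order)
  have "CD G \<subseteq> {{\<one>}, carrier G}"
    using property_A_imp_CD_trivial [OF assms] by blast
  moreover have "{\<one>} \<in> CD G" "carrier G \<in> CD G"
    using max one_in_CD_iff carrier_in_CD by auto
  ultimately show ?thesis
    unfolding CD_simple_def by blast
qed

lemma CD_simple_imp_property_A:
  assumes "CD_simple G"
  shows "property_A G"
  unfolding property_A_iff_cd_measure_less
proof (intro allI impI, elim conjE)
  fix A assume normal_A: "A \<lhd> G" and nontriv: "A \<noteq> {\<one>}"
    and abelian: "\<forall>x\<in>A. \<forall>y\<in>A. x \<otimes> y = y \<otimes> x"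
  have CD: "CD G = {{\<one>}, carrier G}"
    using assms unfolding CD_simple_def .
  then have max: "cd_max G = order G"
    using one_in_CD_iff by simp
  have A: "subgroup A G"
    using normal_A by (rule normal_imp_subgroup)
  show "cd_measure G A < order G"
  proof (rule ccontr)
    assume "\<not> cd_measure G A < order G"
    then have "A \<in> CD G"
      using max CD_iff_cd_max_le [OF A] by simp
    then have A_carrier: "A = carrier G"
      using CD nontriv by simp
    then have "centralizer G A = carrier G"
      using abelian unfolding centralizer_def by auto
    then have "cd_measure G A = order G * order G"
      unfolding cd_measure_def order_def A_carrier by simp
    moreover have "cd_measure G A = order G"
      using \<open>A \<in> CD G\<close> max unfolding CD_def by simp
    ultimately have "order G * order G = order G"
      by (simp only:)
    then have "order G = 1"
      using order_gt_0_iff_finite finite_carrier by simp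
    then show False
      using A_carrier nontriv order_one_triv_iff by simp
  qed
qed

end

theorem corollary1:
  fixes G :: "('a, 'b) monoid_scheme"
  assumes "group G" and "finite (carrier G)" and "indecomposable G"
  shows "property_A G \<longleftrightarrow> CD_simple G"
proof -
  interpret finite_group G
    using assms(1,2) by (intro finite_group.intro finite_group_axioms.intro)
  show ?thesis
    using property_A_imp_CD_simple CD_simple_imp_property_A assms(3) by blast
qed

end
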